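(* Let $T=0$, $\epsilon>0$ admissible, and let $\mathbf X(t)=\mathbf X^{(\epsilon)}(t)$ be the Markov chain on $\mathbb N^{n_\epsilon}$ of the context. Assume $$\lambda<\frac{C}{L\ln(2)\,\epsilon^2\sum_{k=0}^{n_\epsilon-1}l_\epsilon(a_k,0)},\qquad\text{and set}\qquad \tau=\Big(\frac{C}{L\ln(2)\sum_{k=0}^{n_\epsilon-1}l_\epsilon(a_k,0)}-\lambda\epsilon^2\Big)^{-1}>0.$$ Then, writing $\mathbb E_x$ for expectation when $\mathbf X(0)=x$, $$\lim_{\|x\|_\infty\to\infty}\frac{1}{\|x\|_\infty}\,\mathbb E_x\big[\|\mathbf X(\|x\|_\infty\tau)\|_\infty\big]=0.$$
   Context: Setting ($T=0$). $\mathbf S=[-Q,Q]^2$ with opposite edges identified (flat torus), torus distance $\|\cdot\|$. Path-loss $l:[0,\infty)\to[0,\infty)$ bounded, non-increasing, $l(0)=1$; noise $\mathcal N_0>0$; constants $C>0$, $L>0$, $\lambda>0$. Discretization: $\epsilon>0$ is admissible if $2Q/\epsilon$ is an integer; tessellate $\mathbf S$ into $n_\epsilon=(2Q/\epsilon)^2$ squares $A_0,\dots,A_{n_\epsilon-1}$ of side $\epsilon$ with centers $a_i$ and $a_0=0$. Define $l_\epsilon(a_i,a_j)=\sup\{l(\|b-b'\|): b\in\overline{A_i},\,b'\in\overline{A_j}\}$. The chain $\mathbf X$ on $\mathbb N^{n_\epsilon}$ has transitions: for each $i$, $X_i\to X_i+1$ at rate $\lambda\epsilon^2$, and $X_i\to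 X_i-1$ at rate $\frac{C}{L}X_i\log_2\!\Big(1+\frac{1}{\mathcal N_0+\sum_{j}(X_j-\mathbf 1\{j=i\})\,l_\epsilon(a_i,a_j)}\Big)$. *)

theory Defs
  imports "HOL-Analysis.Analysis"
begin

type_synonym idx = "nat \<times> nat"
type_synonym state = "idx \<Rightarrow> nat"

text \<open>Index set of the tessellation: cell (p,q), 0 <= p,q < m, where m = 2Q/eps,
  so n_eps = m^2 cells; cell (0,0) is the one centred at the origin (a_0 = 0).\<close>
definition cells :: "nat \<Rightarrow> idx set" where
  "cells m = {0..<m} \<times> {0..<m}"

text \<open>Distance on the flat torus [-Q,Q]^2 (opposite edges identified).\<close>
definition tdist :: "real \<Rightarrow> real \<times> real \<Rightarrow> real \<times> real \<Rightarrow> real" where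
  "tdist Q b b' = Inf {norm (b - b' + (2 * Q * of_int k1, 2 * Q * of_int k2)) | k1 k2 :: int. True}"

text \<open>Closed square of side eps with centre a_(p,q) = (p eps, q eps) (taken modulo the torus).\<close>
definition cell :: "real \<Rightarrow> idx \<Rightarrow> (real \<times> real) set" where
  "cell eps i = cbox (real (fst i) * eps - eps / 2, real (snd i) * eps - eps / 2)
                     (real (fst i) * eps + eps / 2, real (snd i) * eps + eps / 2)"

definition leps :: "(real \<Rightarrow> real) \<Rightarrow> real \<Rightarrow> real \<Rightarrow> idx \<Rightarrow> idx \<Rightarrow> real" where
  "leps l Q eps i j = Sup {l (tdist Q b b') | b b'. b \<in> cell eps i \<and> b' \<in> cell eps j}"

definition drate :: "(real \<Rightarrow> real) \<Rightarrow> real \<Rightarrow> real \<Rightarrow> nat \<Rightarrow> real \<Rightarrow> real \<Rightarrow> real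
    \<Rightarrow> state \<Rightarrow> idx \<Rightarrow> real" where
  "drate l Q eps m N0 C L x i =
     C / L * real (x i) *
     log 2 (1 + 1 / (N0 + (\<Sum>j\<in>cells m. (real (x j) - (if j = i then 1 else 0)) * leps l Q eps i j)))"

text \<open>Minimal (Feller) transition function of the continuous-time Markov chain on N^I
  with birth rate b at every coordinate and death rate d x i at coordinate i:
  Pn n t x y = probability of being at y at time t after exactly n jumps, starting at x
  (first-jump decomposition of the backward equation).\<close>
fun Pn :: "idx set \<Rightarrow> real \<Rightarrow> (state \<Rightarrow> idx \<Rightarrow> real) \<Rightarrow> nat \<Rightarrow> real \<Rightarrow> state \<Rightarrow> state \<Rightarrow> ennreal" where
  "Pn I b d 0 t x y = (if x = y then ennreal (exp (- (\<Sum>i\<in>I. b + d x i) * t)) else 0)"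
| "Pn I b d (Suc n) t x y =
     (\<integral>\<^sup>+ s. indicator {0..t} s * ennreal (exp (- (\<Sum>i\<in>I. b + d x i) * s)) *
        (\<Sum>i\<in>I. ennreal b * Pn I b d n (t - s) (x(i := x i + 1)) y
               + ennreal (d x i) * Pn I b d n (t - s) (x(i := x i - 1)) y) \<partial>lborel)"

definition trans_prob :: "idx set \<Rightarrow> real \<Rightarrow> (state \<Rightarrow> idx \<Rightarrow> real) \<Rightarrow> real \<Rightarrow> state \<Rightarrow> state \<Rightarrow> ennreal" where
  "trans_prob I b d t x y = (\<Sum>n. Pn I b d n t x y)"

definition expect :: "idx set \<Rightarrow> real \<Rightarrow> (state \<Rightarrow> idx \<Rightarrow> real) \<Rightarrow> real \<Rightarrow> state \<Rightarrow> (state \<Rightarrow> ennreal) \<Rightarrow> ennreal" where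
  "expect I b d t x f = (\<integral>\<^sup>+ y. trans_prob I b d t x y * f y \<partial>count_space UNIV)"

definition supn :: "nat \<Rightarrow> state \<Rightarrow> nat" where
  "supn m x = Max (x ` cells m)"

end

theory Submission
  imports Defs
begin

text \<open>
  Write \<open>S = \<Sum>\<^sub>k l\<^sub>\<epsilon>(a\<^sub>k, 0)\<close>, \<open>A = C / (L ln 2 S)\<close> and \<open>b = \<lambda>\<epsilon>\<^sup>2\<close>, so that \<open>\<tau> = 1 / (A - b)\<close>.
  The interference seen by any cell is at most \<open>S max x\<close>, so a cell whose load is close to
  the maximal load \<open>M\<close> is served at rate close to \<open>A\<close>, while it receives arrivals at rate \<open>b\<close>.
  Hence the soft maximum \<open>lse x = h\<^sup>-\<^sup>1 ln \<Sum>\<^sub>i exp (h x\<^sub>i)\<close> of the loads decreases at rate almost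
  \<open>A - b\<close> as long as it is large. Quantitatively, a smoothed \<open>max (z\<^sub>0, lse x - c r) + \<gamma> r\<close>,
  with \<open>c\<close> slightly below \<open>A - b\<close> and \<open>\<gamma>\<close> small, is a supersolution of the backward equation;
  the comparison principle then gives \<open>E\<^sub>x[max X(M \<tau>)] \<le> z\<^sub>0 + (A - b - c) M \<tau> + \<gamma> M \<tau> + O(1)\<close>,
  which is at most \<open>e M\<close> for large \<open>M\<close>.
\<close>

section \<open>The jump expansion and the comparison principle\<close>

lemma Pn_measurable [measurable]: "(\<lambda>t. Pn I b d n t x y) \<in> borel_measurable borel"
proof (induction n arbitrary: x)
  case 0
  then show ?case by simp
next
  case (Suc n)
  have [measurable]: "(\<lambda>p::real \<times> real. Pn I b d n (fst p - snd p) z y) \<in> borel_measurable (borel \<Otimes>\<^sub>M lborel)" for z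
    using measurable_compose[OF _ Suc.IH[of z], of "\<lambda>p. fst p - snd p"] by (simp add: o_def)
  have [measurable]: "(\<lambda>p::real \<times> real. indicator {0..fst p} (snd p) :: ennreal)
      \<in> borel_measurable (borel \<Otimes>\<^sub>M lborel)"
    unfolding indicator_def atLeastAtMost_iff by measurable
  show ?case
    by simp
qed

fun jump_targets :: "idx set \<Rightarrow> nat \<Rightarrow> state \<Rightarrow> state set" where
  "jump_targets I 0 x = {x}"
| "jump_targets I (Suc n) x =
     (\<Union>i\<in>I. jump_targets I n (x(i := x i + 1)) \<union> jump_targets I n (x(i := x i - 1)))"

lemma finite_jump_targets: "finite I \<Longrightarrow> finite (jump_targets I n x)"
  by (induction n arbitrary: x) auto

lemma Pn_eq_0_outside_jump_targets: "y \<notin> jump_targets I n x \<Longrightarrow> Pn I b d n t x y = 0"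
proof (induction n arbitrary: x t)
  case (Suc n)
  then have "(\<Sum>i\<in>I. ennreal b * Pn I b d n (t - s) (x(i := x i + 1)) y
               + ennreal (d x i) * Pn I b d n (t - s) (x(i := x i - 1)) y) = 0" for s
    by (intro sum.neutral) auto
  then show ?case by simp
qed auto

definition expect_jumps :: "idx set \<Rightarrow> real \<Rightarrow> (state \<Rightarrow> idx \<Rightarrow> real) \<Rightarrow> (state \<Rightarrow> ennreal)
    \<Rightarrow> nat \<Rightarrow> real \<Rightarrow> state \<Rightarrow> ennreal" where
  "expect_jumps I b d f n t x = (\<Sum>y\<in>jump_targets I n x. Pn I b d n t x y * f y)"

lemma expect_jumps_superset:
  "finite Y \<Longrightarrow> jump_targets I n x \<subseteq> Y \<Longrightarrow> expect_jumps I b d f n t x = (\<Sum>y\<in>Y. Pn I b d n t x y * f y)"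
  unfolding expect_jumps_def by (rule sum.mono_neutral_left) (auto simp: Pn_eq_0_outside_jump_targets)

lemma expect_eq_suminf_expect_jumps:
  "finite I \<Longrightarrow> expect I b d t x f = (\<Sum>n. expect_jumps I b d f n t x)"
proof -
  assume "finite I"
  have "expect I b d t x f = (\<Sum>n. \<integral>\<^sup>+ y. Pn I b d n t x y * f y \<partial>count_space UNIV)"
    unfolding expect_def trans_prob_def by (simp add: nn_integral_suminf[symmetric])
  also have "\<dots> = (\<Sum>n. expect_jumps I b d f n t x)"
    unfolding expect_jumps_def using \<open>finite I\<close>
    by (intro suminf_cong nn_integral_count_space') (auto simp: finite_jump_targets Pn_eq_0_outside_jump_targets)
  finally show ?thesis .
qed

lemma expect_jumps_measurable [measurable]: "(\<lambda>s. expect_jumps I b d f n (t - s) z) \<in> borel_measurable borel"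
  unfolding expect_jumps_def by measurable

lemma expect_jumps_0: "expect_jumps I b d f 0 t x = ennreal (exp (- (\<Sum>i\<in>I. b + d x i) * t)) * f x"
  unfolding expect_jumps_def by simp

lemma expect_jumps_Suc:
  assumes "finite I"
  shows "expect_jumps I b d f (Suc n) t x =
    (\<integral>\<^sup>+ s. indicator {0..t} s * ennreal (exp (- (\<Sum>i\<in>I. b + d x i) * s)) *
       (\<Sum>i\<in>I. ennreal b * expect_jumps I b d f n (t - s) (x(i := x i + 1))
             + ennreal (d x i) * expect_jumps I b d f n (t - s) (x(i := x i - 1))) \<partial>lborel)"
proof -
  let ?Y = "jump_targets I (Suc n) x"
  let ?E = "\<lambda>s. indicator {0..t} s * ennreal (exp (- (\<Sum>i\<in>I. b + d x i) * s)) :: ennreal"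
  let ?P = "\<lambda>s i y. Pn I b d n (t - s) (x(i := x i + 1)) y"
  let ?M = "\<lambda>s i y. Pn I b d n (t - s) (x(i := x i - 1)) y"
  have fin: "finite ?Y" using finite_jump_targets[OF assms] .
  have "expect_jumps I b d f (Suc n) t x
      = (\<Sum>y\<in>?Y. \<integral>\<^sup>+ s. ?E s * (\<Sum>i\<in>I. ennreal b * ?P s i y + ennreal (d x i) * ?M s i y) * f y \<partial>lborel)"
    unfolding expect_jumps_def by (simp add: nn_integral_multc)
  also have "\<dots> = (\<integral>\<^sup>+ s. (\<Sum>y\<in>?Y. ?E s * (\<Sum>i\<in>I. ennreal b * ?P s i y + ennreal (d x i) * ?M s i y) * f y) \<partial>lborel)"
    by (rule nn_integral_sum[symmetric]) measurable
  also have "\<dots> = (\<integral>\<^sup>+ s. ?E s * (\<Sum>i\<in>I. ennreal b * expect_jumps I b d f n (t - s) (x(i := x i + 1))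
             + ennreal (d x i) * expect_jumps I b d f n (t - s) (x(i := x i - 1))) \<partial>lborel)"
  proof (intro nn_integral_cong)
    fix s
    have "i \<in> I \<Longrightarrow> expect_jumps I b d f n (t - s) (x(i := x i + 1)) = (\<Sum>y\<in>?Y. ?P s i y * f y)"
      "i \<in> I \<Longrightarrow> expect_jumps I b d f n (t - s) (x(i := x i - 1)) = (\<Sum>y\<in>?Y. ?M s i y * f y)" for i
      by (rule expect_jumps_superset[OF fin]; auto)+
    then show "(\<Sum>y\<in>?Y. ?E s * (\<Sum>i\<in>I. ennreal b * ?P s i y + ennreal (d x i) * ?M s i y) * f y)
      = ?E s * (\<Sum>i\<in>I. ennreal b * expect_jumps I b d f n (t - s) (x(i := x i + 1))
             + ennreal (d x i) * expect_jumps I b d f n (t - s) (x(i := x i - 1)))"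
      by (simp add: sum_distrib_left sum_distrib_right sum.distrib distrib_left distrib_right
          sum.swap[of _ ?Y] mult.assoc mult.left_commute[of _ "f _"] del: jump_targets.simps cong: sum.cong)
  qed
  finally show ?thesis .
qed

definition expect_upto :: "idx set \<Rightarrow> real \<Rightarrow> (state \<Rightarrow> idx \<Rightarrow> real) \<Rightarrow> (state \<Rightarrow> ennreal)
    \<Rightarrow> nat \<Rightarrow> real \<Rightarrow> state \<Rightarrow> ennreal" where
  "expect_upto I b d f N t x = (\<Sum>n<N. expect_jumps I b d f n t x)"

lemma expect_upto_Suc:
  assumes "finite I"
  shows "expect_upto I b d f (Suc N) t x =
    ennreal (exp (- (\<Sum>i\<in>I. b + d x i) * t)) * f x +
    (\<integral>\<^sup>+ s. indicator {0..t} s * ennreal (exp (- (\<Sum>i\<in>I. b + d x i) * s)) *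
       (\<Sum>i\<in>I. ennreal b * expect_upto I b d f N (t - s) (x(i := x i + 1))
             + ennreal (d x i) * expect_upto I b d f N (t - s) (x(i := x i - 1))) \<partial>lborel)"
proof -
  let ?E = "\<lambda>s. indicator {0..t} s * ennreal (exp (- (\<Sum>i\<in>I. b + d x i) * s)) :: ennreal"
  let ?J = "\<lambda>n s i. ennreal b * expect_jumps I b d f n (t - s) (x(i := x i + 1))
             + ennreal (d x i) * expect_jumps I b d f n (t - s) (x(i := x i - 1))"
  have "(\<Sum>n<N. expect_jumps I b d f (Suc n) t x) = (\<Sum>n<N. \<integral>\<^sup>+ s. ?E s * (\<Sum>i\<in>I. ?J n s i) \<partial>lborel)"
    by (simp add: expect_jumps_Suc[OF assms])
  also have "\<dots> = (\<integral>\<^sup>+ s. (\<Sum>n<N. ?E s * (\<Sum>i\<in>I. ?J n s i)) \<partial>lborel)"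
    by (rule nn_integral_sum[symmetric]) measurable
  also have "\<dots> = (\<integral>\<^sup>+ s. ?E s * (\<Sum>i\<in>I. ennreal b * expect_upto I b d f N (t - s) (x(i := x i + 1))
             + ennreal (d x i) * expect_upto I b d f N (t - s) (x(i := x i - 1))) \<partial>lborel)"
    unfolding expect_upto_def
    by (simp add: distrib_left sum_distrib_left sum.distrib sum.swap[of _ "{..<N}"])
  finally show ?thesis
    by (simp only: expect_upto_def[of I b d f "Suc N"] sum.lessThan_Suc_shift expect_jumps_0)
qed

lemma nn_integral_Duhamel:
  fixes w w' :: "real \<Rightarrow> real"
  assumes der: "\<And>r. (w has_real_derivative w' r) (at r)" and cont: "\<And>r. isCont w' r"
    and nonneg: "\<And>r. 0 \<le> r \<Longrightarrow> r \<le> t \<Longrightarrow> 0 \<le> q * w r + w' r" and "0 \<le> t"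
  shows "(\<integral>\<^sup>+ s. ennreal (exp (- q * s) * (q * w (t - s) + w' (t - s))) * indicator {0..t} s \<partial>lborel)
      = ennreal (w t - exp (- q * t) * w 0)"
    and "exp (- q * t) * w 0 \<le> w t"
proof -
  define G' where "G' s = exp (- q * s) * (q * w (t - s) + w' (t - s))" for s
  have G: "((\<lambda>s. - exp (- q * s) * w (t - s)) has_real_derivative G' s) (at s)" for s
  proof -
    have "((\<lambda>s. t - s) has_real_derivative -1) (at s)"
      by (auto intro!: derivative_eq_intros)
    from DERIV_chain2[OF der this] have "((\<lambda>s. w (t - s)) has_real_derivative - w' (t - s)) (at s)"
      by simp
    moreover have "((\<lambda>s. - exp (- q * s)) has_real_derivative q * exp (- q * s)) (at s)"
      by (auto intro!: derivative_eq_intros)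
    ultimately show ?thesis
      unfolding G'_def by (rule DERIV_cong[OF DERIV_mult[rotated]]) (simp add: algebra_simps)
  qed
  have "isCont (\<lambda>s. w (t - s)) s" "isCont (\<lambda>s. w' (t - s)) s" for s
  proof -
    have "isCont (\<lambda>s. t - s) s" for s :: real
      by (intro continuous_intros)
    then show "isCont (\<lambda>s. w (t - s)) s" "isCont (\<lambda>s. w' (t - s)) s" for s
      using isCont_o2 DERIV_isCont[OF der] cont by blast+
  qed
  then have "isCont G' s" for s
    unfolding G'_def by (intro continuous_intros)
  then have "G' \<in> borel_measurable borel"
    by (intro borel_measurable_continuous_onI continuous_at_imp_continuous_on) auto
  moreover have G'_nonneg: "0 \<le> G' s" if "0 \<le> s" "s \<le> t" for s
    unfolding G'_def using nonneg[of "t - s"] that by simp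
  ultimately have "(\<integral>\<^sup>+ s. ennreal (G' s) * indicator {0..t} s \<partial>lborel)
      = ennreal (- exp (- q * t) * w (t - t) - - exp (- q * 0) * w (t - 0))"
    using G \<open>0 \<le> t\<close> by (intro nn_integral_FTC_Icc) auto
  then show "(\<integral>\<^sup>+ s. ennreal (exp (- q * s) * (q * w (t - s) + w' (t - s))) * indicator {0..t} s \<partial>lborel)
      = ennreal (w t - exp (- q * t) * w 0)"
    unfolding G'_def by simp
  have "- exp (- q * 0) * w (t - 0) \<le> - exp (- q * t) * w (t - t)"
    by (rule DERIV_nonneg_imp_nondecreasing[OF \<open>0 \<le> t\<close>]) (use G G'_nonneg in auto)
  then show "exp (- q * t) * w 0 \<le> w t"
    by simp
qed

definition generator :: "idx set \<Rightarrow> real \<Rightarrow> (state \<Rightarrow> idx \<Rightarrow> real) \<Rightarrow> (state \<Rightarrow> real) \<Rightarrow> state \<Rightarrow> real" where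
  "generator I b d f x =
     (\<Sum>i\<in>I. b * f (x(i := x i + 1)) + d x i * f (x(i := x i - 1))) - (\<Sum>i\<in>I. b + d x i) * f x"

lemma generator_eq_sum_diff:
  "generator I b d f x = (\<Sum>i\<in>I. b * (f (x(i := x i + 1)) - f x) + d x i * (f (x(i := x i - 1)) - f x))"
  unfolding generator_def by (simp add: sum_subtractf sum_distrib_left sum_distrib_right algebra_simps sum.distrib)

context
  fixes I :: "idx set" and b :: real and d :: "state \<Rightarrow> idx \<Rightarrow> real"
    and w w' :: "real \<Rightarrow> state \<Rightarrow> real" and f :: "state \<Rightarrow> ennreal"
  assumes I: "finite I" and b: "0 \<le> b" and d_nonneg: "\<And>x i. i \<in> I \<Longrightarrow> 0 \<le> d x i"
    and der: "\<And>x r. ((\<lambda>r. w r x) has_real_derivative w' r x) (at r)"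
    and cont: "\<And>x r. isCont (\<lambda>r. w' r x) r"
    and w_nonneg: "\<And>x r. 0 \<le> r \<Longrightarrow> 0 \<le> w r x"
    and init: "\<And>x. f x \<le> ennreal (w 0 x)"
    and super: "\<And>x r. 0 \<le> r \<Longrightarrow> generator I b d (w r) x \<le> w' r x"
begin

lemma jump_sum_le_supersolution:
  assumes IH: "\<And>y. expect_upto I b d f N r y \<le> ennreal (w r y)" and "0 \<le> r"
  shows "(\<Sum>i\<in>I. ennreal b * expect_upto I b d f N r (x(i := x i + 1))
            + ennreal (d x i) * expect_upto I b d f N r (x(i := x i - 1)))
    \<le> ennreal ((\<Sum>i\<in>I. b + d x i) * w r x + w' r x)"
proof -
  have "(\<Sum>i\<in>I. ennreal b * expect_upto I b d f N r (x(i := x i + 1))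
            + ennreal (d x i) * expect_upto I b d f N r (x(i := x i - 1)))
      \<le> (\<Sum>i\<in>I. ennreal b * ennreal (w r (x(i := x i + 1))) + ennreal (d x i) * ennreal (w r (x(i := x i - 1))))"
    using IH by (intro sum_mono add_mono mult_left_mono) auto
  also have "\<dots> = (\<Sum>i\<in>I. ennreal (b * w r (x(i := x i + 1)) + d x i * w r (x(i := x i - 1))))"
    using b d_nonneg w_nonneg \<open>0 \<le> r\<close> by (intro sum.cong) (simp_all add: ennreal_mult ennreal_plus)
  also have "\<dots> = ennreal (\<Sum>i\<in>I. b * w r (x(i := x i + 1)) + d x i * w r (x(i := x i - 1)))"
    using b d_nonneg w_nonneg \<open>0 \<le> r\<close> by (intro sum_ennreal add_nonneg_nonneg mult_nonneg_nonneg) auto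
  also have "\<dots> \<le> ennreal ((\<Sum>i\<in>I. b + d x i) * w r x + w' r x)"
    using super[OF \<open>0 \<le> r\<close>, of x] unfolding generator_def by (intro ennreal_leI) auto
  finally show ?thesis .
qed

text \<open>The first-jump decomposition of \<open>expect_upto\<close> and Duhamel's formula for \<open>w\<close> have the same
  shape, and the jump terms are dominated by \<open>jump_sum_le_supersolution\<close>.\<close>
lemma expect_upto_le_supersolution: "0 \<le> t \<Longrightarrow> expect_upto I b d f N t x \<le> ennreal (w t x)"
proof (induction N arbitrary: t x)
  case 0
  then show ?case by (simp add: expect_upto_def)
next
  case (Suc N)
  define q where "q = (\<Sum>i\<in>I. b + d x i)"
  have killed_nonneg: "0 \<le> q * w r x + w' r x" if "0 \<le> r" for r
  proof -
    have "0 \<le> (\<Sum>i\<in>I. b * w r (x(i := x i + 1)) + d x i * w r (x(i := x i - 1)))"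
      using b d_nonneg w_nonneg that by (intro sum_nonneg add_nonneg_nonneg mult_nonneg_nonneg) auto
    then show ?thesis
      using super[OF that, of x] unfolding generator_def q_def by linarith
  qed
  have "expect_upto I b d f (Suc N) t x \<le> ennreal (exp (- q * t)) * ennreal (w 0 x) +
      (\<integral>\<^sup>+ s. ennreal (exp (- q * s) * (q * w (t - s) x + w' (t - s) x)) * indicator {0..t} s \<partial>lborel)"
    unfolding expect_upto_Suc[OF I] q_def[symmetric] using init jump_sum_le_supersolution Suc.IH
    by (intro add_mono mult_left_mono nn_integral_mono)
      (auto split: split_indicator simp: mult.commute ennreal_mult' mult_left_mono q_def)
  also have "\<dots> = ennreal (exp (- q * t) * w 0 x) + ennreal (w t x - exp (- q * t) * w 0 x)"
    using nn_integral_Duhamel(1)[OF der cont killed_nonneg \<open>0 \<le> t\<close>] w_nonneg[of 0 x]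
    by (simp add: ennreal_mult')
  also have "\<dots> = ennreal (w t x)"
    using nn_integral_Duhamel(2)[OF der cont killed_nonneg \<open>0 \<le> t\<close>] w_nonneg[of 0 x]
    by (subst ennreal_plus[symmetric]) auto
  finally show ?case .
qed

lemma expect_le_supersolution: "0 \<le> t \<Longrightarrow> expect I b d t x f \<le> ennreal (w t x)"
  unfolding expect_eq_suminf_expect_jumps[OF I]
  using expect_upto_le_supersolution[unfolded expect_upto_def] by (intro suminf_le_const) auto

end

section \<open>Softplus and the log-sum-exp soft maximum\<close>

definition softplus :: "real \<Rightarrow> real \<Rightarrow> real" where
  "softplus h z = ln (1 + exp (h * z)) / h"

definition logistic :: "real \<Rightarrow> real \<Rightarrow> real" where
  "logistic h z = exp (h * z) / (1 + exp (h * z))"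

lemma has_real_derivative_softplus:
  assumes "0 < h"
  shows "(softplus h has_real_derivative logistic h z) (at z)"
proof -
  have "((\<lambda>z. ln (1 + exp (h * z)) / h) has_real_derivative
      1 / (1 + exp (h * z)) * (exp (h * z) * h) / h) (at z)"
    by (auto intro!: derivative_eq_intros simp: add_pos_pos)
  then show ?thesis
    unfolding softplus_def logistic_def using assms by simp
qed

lemma isCont_logistic: "isCont (logistic h) z"
  unfolding logistic_def by (intro continuous_intros) (smt (verit) exp_gt_zero)

lemma logistic_pos: "0 < logistic h z"
  unfolding logistic_def by (simp add: add_pos_pos)

lemma logistic_le_exp: "logistic h z \<le> exp (h * z)"
  unfolding logistic_def by (simp add: divide_le_eq add_pos_pos)

lemma logistic_altdef: "logistic h z = 1 - 1 / (1 + exp (h * z))"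
proof -
  have "0 < 1 + exp (h * z)"
    by (simp add: add_pos_pos)
  then show ?thesis
    unfolding logistic_def by (simp add: field_simps)
qed

lemma logistic_mono: "0 < h \<Longrightarrow> z \<le> z' \<Longrightarrow> logistic h z \<le> logistic h z'"
  unfolding logistic_altdef by (simp add: frac_le add_pos_pos)

lemma logistic_add_le: "0 < h \<Longrightarrow> a \<le> 1 \<Longrightarrow> logistic h (z + a) \<le> exp h * logistic h z"
proof -
  assume h: "0 < h" and a: "a \<le> 1"
  have "logistic h (z + a) \<le> logistic h (z + 1)"
    using h a by (intro logistic_mono) auto
  also have "\<dots> = exp h * exp (h * z) / (1 + exp h * exp (h * z))"
    unfolding logistic_def by (simp add: distrib_left exp_add mult.commute)
  also have "\<dots> \<le> exp h * logistic h z"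
    unfolding logistic_def using h by (simp add: field_simps add_pos_pos)
  finally show ?thesis .
qed

lemma logistic_add_ge: "0 < h \<Longrightarrow> -1 \<le> a \<Longrightarrow> exp (- h) * logistic h z \<le> logistic h (z + a)"
proof -
  assume h: "0 < h" and a: "-1 \<le> a"
  have "exp (- h) * logistic h z \<le> exp (- h) * exp (h * z) / (1 + exp (- h) * exp (h * z))"
    unfolding logistic_def using h by (simp add: field_simps add_pos_pos)
  also have "\<dots> = logistic h (z - 1)"
    unfolding logistic_def by (simp add: algebra_simps flip: exp_add)
  also have "\<dots> \<le> logistic h (z + a)"
    using h a by (intro logistic_mono) auto
  finally show ?thesis .
qed

lemma softplus_diff_le:
  assumes "0 < h"
  shows "softplus h (z + a) - softplus h z \<le> logistic h (z + a) * a"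
proof (cases a "0::real" rule: linorder_cases)
  case less
  obtain y where "z + a < y" "y < z" "softplus h z - softplus h (z + a) = (z - (z + a)) * logistic h y"
    using MVT2[of "z + a" z "softplus h" "logistic h"] less has_real_derivative_softplus[OF assms] by auto
  moreover have "a * logistic h y \<le> a * logistic h (z + a)"
    using calculation assms less by (intro mult_left_mono_neg logistic_mono) auto
  ultimately show ?thesis
    by (smt (verit) mult.commute mult_minus_left)
next
  case greater
  obtain y where "z < y" "y < z + a" "softplus h (z + a) - softplus h z = (z + a - z) * logistic h y"
    using MVT2[of z "z + a" "softplus h" "logistic h"] greater has_real_derivative_softplus[OF assms] by auto
  moreover have "logistic h y \<le> logistic h (z + a)"
    using calculation assms by (intro logistic_mono) auto
  ultimately show ?thesis
    using greater by (simp add: algebra_simps mult_left_mono)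
qed simp

lemma softplus_ge: "0 < h \<Longrightarrow> z \<le> softplus h z"
proof -
  assume "0 < h"
  have "h * z \<le> ln (1 + exp (h * z))"
    using ln_le_cancel_iff[of "exp (h * z)" "1 + exp (h * z)"] by (simp add: add_pos_pos)
  with \<open>0 < h\<close> show ?thesis
    unfolding softplus_def by (simp add: le_divide_eq mult.commute)
qed

lemma softplus_nonneg: "0 < h \<Longrightarrow> 0 \<le> softplus h z"
  unfolding softplus_def by simp

lemma softplus_le: "0 < h \<Longrightarrow> softplus h z \<le> max 0 z + ln 2 / h"
proof -
  assume h: "0 < h"
  have "1 + exp (h * z) \<le> 2 * exp (h * max 0 z)"
    using h by (cases "z \<le> 0") (auto simp: max_def mult_le_0_iff)
  then have "ln (1 + exp (h * z)) \<le> ln (2 * exp (h * max 0 z))"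
    by (simp add: add_pos_pos)
  then have "ln (1 + exp (h * z)) \<le> ln 2 + h * max 0 z"
    by (simp add: ln_mult)
  with h show ?thesis
    unfolding softplus_def by (simp add: divide_le_eq algebra_simps)
qed

definition exp_sum :: "'a set \<Rightarrow> real \<Rightarrow> ('a \<Rightarrow> nat) \<Rightarrow> real" where
  "exp_sum I h x = (\<Sum>i\<in>I. exp (h * real (x i)))"

definition lse :: "'a set \<Rightarrow> real \<Rightarrow> ('a \<Rightarrow> nat) \<Rightarrow> real" where
  "lse I h x = ln (exp_sum I h x) / h"

lemma exp_sum_pos: "finite I \<Longrightarrow> I \<noteq> {} \<Longrightarrow> 0 < exp_sum I h x"
  unfolding exp_sum_def by (intro sum_pos) auto

lemma exp_le_exp_sum: "finite I \<Longrightarrow> i \<in> I \<Longrightarrow> exp (h * real (x i)) \<le> exp_sum I h x"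
  unfolding exp_sum_def by (rule member_le_sum) auto

lemma exp_sum_fun_upd:
  assumes "finite I" "i \<in> I"
  shows "exp_sum I h (x(i := v)) = exp_sum I h x + (exp (h * real v) - exp (h * real (x i)))"
proof -
  have "exp_sum I h (x(i := v))
      = (\<Sum>j\<in>I. exp (h * real (x j)) + (if j = i then exp (h * real v) - exp (h * real (x i)) else 0))"
    unfolding exp_sum_def by (rule sum.cong) auto
  then show ?thesis
    unfolding exp_sum_def using assms by (simp add: sum.distrib)
qed

lemma exp_Max_le_exp_sum:
  assumes "finite I" "I \<noteq> {}"
  shows "exp (h * real (Max (x ` I))) \<le> exp_sum I h x"
proof -
  have "Max (x ` I) \<in> x ` I"
    using assms by (intro Max_in) auto
  then show ?thesis
    using exp_le_exp_sum[OF assms(1)] by auto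
qed

lemma Max_le_lse:
  assumes "finite I" "I \<noteq> {}" "0 < h"
  shows "real (Max (x ` I)) \<le> lse I h x"
proof -
  have "h * real (Max (x ` I)) \<le> ln (exp_sum I h x)"
    using exp_Max_le_exp_sum[OF assms(1,2)] exp_sum_pos[OF assms(1,2)] by (simp add: ln_ge_iff)
  then show ?thesis
    unfolding lse_def using assms by (simp add: le_divide_eq mult.commute)
qed

lemma lse_le_Max:
  assumes "finite I" "I \<noteq> {}" "0 < h"
  shows "lse I h x \<le> real (Max (x ` I)) + ln (card I) / h"
proof -
  have card: "0 < real (card I)"
    using assms by (simp add: card_gt_0_iff)
  have "exp_sum I h x \<le> card I * exp (h * real (Max (x ` I)))"
    unfolding exp_sum_def using assms by (intro sum_bounded_above) simp
  then have "ln (exp_sum I h x) \<le> ln (card I) + h * real (Max (x ` I))"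
    using exp_sum_pos[OF assms(1,2)] card by (simp add: ln_mult flip: ln_le_cancel_iff)
  then show ?thesis
    unfolding lse_def using assms by (simp add: divide_le_eq algebra_simps)
qed

lemma exp_minus_one_le: fixes h :: real shows "0 \<le> h \<Longrightarrow> exp h - 1 \<le> h * exp h"
  using mult_right_mono[OF exp_ge_add_one_self[of "- h"], of "exp h"] by (simp add: algebra_simps flip: exp_add)

lemma mult_exp_minus_le: fixes h :: real shows "h * exp (- h) \<le> 1 - exp (- h)"
  using mult_right_mono[OF exp_ge_add_one_self[of h], of "exp (- h)"] by (simp add: algebra_simps flip: exp_add)

lemma lse_fun_upd_Suc:
  fixes x :: "'a \<Rightarrow> nat"
  assumes I: "finite I" "i \<in> I" and h: "0 < h"
  defines "\<Delta> \<equiv> lse I h (x(i := x i + 1)) - lse I h x"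
  shows "0 \<le> \<Delta>" "\<Delta> \<le> 1" "\<Delta> \<le> (exp h - 1) / h * (exp (h * real (x i)) / exp_sum I h x)"
proof -
  define E where "E = exp (h * real (x i))"
  define Z where "Z = exp_sum I h x"
  have Z: "0 < Z" "0 < E" "E \<le> Z"
    unfolding E_def Z_def using exp_sum_pos exp_le_exp_sum I by auto
  have eh: "1 \<le> exp h"
    using h by simp
  define q where "q = (Z + E * (exp h - 1)) / Z"
  have q: "1 \<le> q" "q \<le> exp h"
    unfolding q_def using Z eh mult_right_mono[OF Z(3), of "exp h - 1"] by (auto simp: field_simps)
  have \<Delta>: "\<Delta> = ln q / h"
  proof -
    have "exp_sum I h (x(i := x i + 1)) = Z + E * (exp h - 1)"
      unfolding exp_sum_fun_upd[OF I] E_def Z_def by (simp add: algebra_simps exp_add)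
    moreover have "ln q = ln (Z + E * (exp h - 1)) - ln Z"
      unfolding q_def using Z eh by (intro ln_divide_pos) (auto intro: add_pos_nonneg)
    ultimately show ?thesis
      unfolding \<Delta>_def lse_def Z_def[symmetric] by (simp add: diff_divide_distrib)
  qed
  show "0 \<le> \<Delta>"
    unfolding \<Delta> using q h by simp
  show "\<Delta> \<le> 1"
    unfolding \<Delta> using q h by (simp add: divide_le_eq ln_le_cancel_iff[of q "exp h", simplified])
  have "ln q \<le> q - 1"
    using q by (intro ln_le_minus_one) auto
  also have "\<dots> = (exp h - 1) * (E / Z)"
    unfolding q_def using Z by (simp add: field_simps)
  finally have "ln q / h \<le> (exp h - 1) * (E / Z) / h"
    using h by (intro divide_right_mono) auto
  then show "\<Delta> \<le> (exp h - 1) / h * (exp (h * real (x i)) / exp_sum I h x)"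
    unfolding \<Delta> E_def[symmetric] Z_def[symmetric] by (simp add: ac_simps)
qed

lemma sum_lse_fun_upd_Suc_le:
  assumes "finite I" "I \<noteq> {}" "0 < h"
  shows "(\<Sum>i\<in>I. lse I h (x(i := x i + 1)) - lse I h x) \<le> exp h"
proof -
  have "(\<Sum>i\<in>I. lse I h (x(i := x i + 1)) - lse I h x)
      \<le> (\<Sum>i\<in>I. (exp h - 1) / h * (exp (h * real (x i)) / exp_sum I h x))"
    using assms by (intro sum_mono lse_fun_upd_Suc(3))
  also have "\<dots> = (exp h - 1) / h"
    using exp_sum_pos[OF assms(1,2), of h x]
    by (simp add: sum_distrib_left[symmetric] sum_divide_distrib[symmetric] exp_sum_def)
  also have "\<dots> \<le> exp h"
    using exp_minus_one_le[of h] assms(3) by (simp add: divide_le_eq mult.commute)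
  finally show ?thesis .
qed

lemma lse_fun_upd_pred:
  fixes x :: "'a \<Rightarrow> nat"
  assumes I: "finite I" "i \<in> I" and h: "0 < h" and "1 \<le> x i"
  defines "\<Delta> \<equiv> lse I h (x(i := x i - 1)) - lse I h x"
  shows "\<Delta> \<le> 0" "-1 \<le> \<Delta>" "\<Delta> \<le> - exp (- h) * (exp (h * real (x i)) / exp_sum I h x)"
proof -
  define E where "E = exp (h * real (x i))"
  define Z where "Z = exp_sum I h x"
  have Z: "0 < Z" "0 < E" "E \<le> Z"
    unfolding E_def Z_def using exp_sum_pos exp_le_exp_sum I by auto
  have eh: "exp (- h) \<le> 1"
    using h by simp
  define q where "q = (Z - E * (1 - exp (- h))) / Z"
  have q: "exp (- h) \<le> q" "q \<le> 1"
    unfolding q_def using Z eh mult_right_mono[OF Z(3), of "1 - exp (- h)"] by (auto simp: field_simps)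
  have q0: "0 < q"
    using q(1) exp_gt_zero[of "- h"] by linarith
  have \<Delta>: "\<Delta> = ln q / h"
  proof -
    have "exp_sum I h (x(i := x i - 1)) = Z - E * (1 - exp (- h))"
      unfolding exp_sum_fun_upd[OF I] E_def Z_def using \<open>1 \<le> x i\<close>
      by (simp add: of_nat_diff algebra_simps flip: exp_add)
    moreover have "0 < Z - E * (1 - exp (- h))"
      using q0 Z unfolding q_def by (simp add: zero_less_divide_iff)
    then have "ln q = ln (Z - E * (1 - exp (- h))) - ln Z"
      unfolding q_def using Z by (intro ln_divide_pos) auto
    ultimately show ?thesis
      unfolding \<Delta>_def lse_def Z_def[symmetric] by (simp add: diff_divide_distrib)
  qed
  show "\<Delta> \<le> 0"
    unfolding \<Delta> using q q0 h by (simp add: divide_le_0_iff)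
  have "- h \<le> ln q"
    using q(1) q0 by (metis ln_exp ln_le_cancel_iff exp_gt_zero)
  then show "-1 \<le> \<Delta>"
    unfolding \<Delta> using h by (simp add: le_divide_eq)
  have "ln q \<le> - (1 - exp (- h)) * (E / Z)"
    using ln_le_minus_one[OF q0] Z unfolding q_def by (simp add: field_simps)
  also have "\<dots> \<le> - (h * exp (- h)) * (E / Z)"
    using mult_exp_minus_le[of h] Z by (intro mult_right_mono) auto
  finally show "\<Delta> \<le> - exp (- h) * (exp (h * real (x i)) / exp_sum I h x)"
    unfolding \<Delta> E_def[symmetric] Z_def[symmetric] using h by (simp add: divide_le_eq field_simps)
qed

text \<open>Births raise the soft maximum by at most \<open>exp h\<close> in total; a death at \<open>i\<close> lowers it by at least
  \<open>exp (-h)\<close> times the Gibbs weight of \<open>i\<close>. Convexity of softplus turns this into the bound.\<close>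
lemma softplus_lse_drift:
  fixes x :: "'a \<Rightarrow> nat" and d :: "'a \<Rightarrow> real" and s :: real
  assumes I: "finite I" "I \<noteq> {}" and h: "0 < h" and b: "0 \<le> b"
    and d_nonneg: "\<And>i. i \<in> I \<Longrightarrow> 0 \<le> d i" and d_zero: "\<And>i. i \<in> I \<Longrightarrow> x i = 0 \<Longrightarrow> d i = 0"
  defines "\<phi> \<equiv> \<lambda>y. softplus h (lse I h y - s)"
  shows "(\<Sum>i\<in>I. b * (\<phi> (x(i := x i + 1)) - \<phi> x) + d i * (\<phi> (x(i := x i - 1)) - \<phi> x))
    \<le> logistic h (lse I h x - s) *
       (b * exp (2 * h) - exp (- 2 * h) * (\<Sum>i\<in>I. d i * (exp (h * real (x i)) / exp_sum I h x)))"
proof -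
  define z where "z = lse I h x - s"
  define \<sigma> where "\<sigma> = logistic h z"
  define p where "p i = exp (h * real (x i)) / exp_sum I h x" for i
  define up where "up i = lse I h (x(i := x i + 1)) - lse I h x" for i
  define down where "down i = lse I h (x(i := x i - 1)) - lse I h x" for i
  have \<sigma>: "0 < \<sigma>"
    unfolding \<sigma>_def by (rule logistic_pos)
  have birth: "b * (\<phi> (x(i := x i + 1)) - \<phi> x) \<le> b * exp h * \<sigma> * up i" if i: "i \<in> I" for i
  proof -
    have up: "0 \<le> up i" "up i \<le> 1"
      unfolding up_def using lse_fun_upd_Suc[OF I(1) i h] by auto
    have "\<phi> (x(i := x i + 1)) - \<phi> x = softplus h (z + up i) - softplus h z"
      unfolding \<phi>_def z_def up_def by (simp add: algebra_simps)
    also have "\<dots> \<le> logistic h (z + up i) * up i"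
      by (rule softplus_diff_le[OF h])
    also have "\<dots> \<le> exp h * \<sigma> * up i"
      unfolding \<sigma>_def using logistic_add_le[OF h up(2)] up(1) by (intro mult_right_mono)
    finally show ?thesis
      using b by (simp add: mult_left_mono mult.assoc)
  qed
  have death: "d i * (\<phi> (x(i := x i - 1)) - \<phi> x) \<le> - (exp (- 2 * h) * \<sigma> * (d i * p i))" if i: "i \<in> I" for i
  proof (cases "x i = 0")
    case False
    have down: "down i \<le> 0" "-1 \<le> down i" "down i \<le> - exp (- h) * p i"
      unfolding down_def p_def using lse_fun_upd_pred[OF I(1) i h] False by auto
    have "\<phi> (x(i := x i - 1)) - \<phi> x = softplus h (z + down i) - softplus h z"
      unfolding \<phi>_def z_def down_def by (simp add: algebra_simps)
    also have "\<dots> \<le> logistic h (z + down i) * down i"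
      by (rule softplus_diff_le[OF h])
    also have "\<dots> \<le> exp (- h) * \<sigma> * down i"
      unfolding \<sigma>_def using logistic_add_ge[OF h down(2)] down(1) by (intro mult_right_mono_neg)
    also have "\<dots> \<le> exp (- h) * \<sigma> * (- exp (- h) * p i)"
      using down(3) \<sigma> by (intro mult_left_mono) auto
    also have "\<dots> = - (exp (- 2 * h) * \<sigma> * p i)"
      by (simp add: algebra_simps flip: exp_add)
    finally have "d i * (\<phi> (x(i := x i - 1)) - \<phi> x) \<le> d i * - (exp (- 2 * h) * \<sigma> * p i)"
      using d_nonneg[OF i] by (intro mult_left_mono)
    then show ?thesis
      by (simp add: algebra_simps)
  qed (simp add: d_zero[OF i])
  have "(\<Sum>i\<in>I. b * (\<phi> (x(i := x i + 1)) - \<phi> x) + d i * (\<phi> (x(i := x i - 1)) - \<phi> x))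
      \<le> (\<Sum>i\<in>I. b * exp h * \<sigma> * up i - exp (- 2 * h) * \<sigma> * (d i * p i))"
    using birth death by (intro sum_mono) fastforce
  also have "\<dots> = b * exp h * \<sigma> * (\<Sum>i\<in>I. up i) - exp (- 2 * h) * \<sigma> * (\<Sum>i\<in>I. d i * p i)"
    by (simp add: sum_subtractf sum_distrib_left)
  also have "\<dots> \<le> b * exp h * \<sigma> * exp h - exp (- 2 * h) * \<sigma> * (\<Sum>i\<in>I. d i * p i)"
    unfolding up_def using sum_lse_fun_upd_Suc_le[OF I h, of x] b \<sigma> by (simp add: mult_left_mono)
  also have "\<dots> = \<sigma> * (b * exp (2 * h) - exp (- 2 * h) * (\<Sum>i\<in>I. d i * p i))"
    by (simp add: algebra_simps flip: exp_add)
  finally show ?thesis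
    unfolding \<sigma>_def z_def p_def .
qed

lemma sum_gibbs_weights: "finite I \<Longrightarrow> I \<noteq> {} \<Longrightarrow> (\<Sum>i\<in>I. exp (h * real (x i)) / exp_sum I h x) = 1"
  using exp_sum_pos[of I h x] by (simp add: sum_divide_distrib[symmetric] exp_sum_def)

text \<open>Coordinates below \<open>(1 - \<rho>) max x\<close> have Gibbs weight at most \<open>exp (-h \<rho> max x)\<close> each.\<close>
lemma gibbs_mass_near_Max_ge:
  fixes x :: "'a \<Rightarrow> nat"
  assumes I: "finite I" "I \<noteq> {}" and h: "0 < h"
    and concentrated: "real (card I) * exp (- h * \<rho> * real (Max (x ` I))) \<le> \<rho>"
  defines "J \<equiv> {i \<in> I. (1 - \<rho>) * real (Max (x ` I)) \<le> real (x i)}"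
  shows "1 - \<rho> \<le> (\<Sum>i\<in>J. exp (h * real (x i)) / exp_sum I h x)"
proof -
  define M where "M = real (Max (x ` I))"
  define p where "p i = exp (h * real (x i)) / exp_sum I h x" for i
  have "p i \<le> exp (- h * \<rho> * M)" if "i \<in> I - J" for i
  proof -
    have "exp (h * real (x i)) \<le> exp (h * ((1 - \<rho>) * M))"
      using that h unfolding J_def M_def by auto
    also have "\<dots> = exp (- h * \<rho> * M) * exp (h * M)"
      by (simp add: algebra_simps flip: exp_add)
    also have "\<dots> \<le> exp (- h * \<rho> * M) * exp_sum I h x"
      using exp_Max_le_exp_sum[OF I] unfolding M_def by simp
    finally show ?thesis
      unfolding p_def using exp_sum_pos[OF I] by (simp add: divide_le_eq)
  qed
  then have "(\<Sum>i\<in>I - J. p i) \<le> real (card (I - J)) * exp (- h * \<rho> * M)"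
    by (intro sum_bounded_above) auto
  also have "\<dots> \<le> real (card I) * exp (- h * \<rho> * M)"
    using I by (intro mult_right_mono) (auto intro: card_mono)
  finally have "(\<Sum>i\<in>I - J. p i) \<le> \<rho>"
    using concentrated unfolding M_def by linarith
  moreover have "(\<Sum>i\<in>I. p i) = (\<Sum>i\<in>I - J. p i) + (\<Sum>i\<in>J. p i)"
    using I by (intro sum.subset_diff) (auto simp: J_def)
  ultimately show ?thesis
    using sum_gibbs_weights[OF I, of h x] unfolding p_def by linarith
qed

lemma near_max_share_ge:
  fixes M K \<rho> y :: real
  assumes "0 < M" "0 \<le> K" "K \<le> \<rho> * M" "0 < \<rho>" "\<rho> < 1" "(1 - \<rho>) * M \<le> y"
  shows "(1 - \<rho>) ^ 2 \<le> y / (M + K)"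
proof -
  have "(1 - \<rho>) * (M + K) \<le> (1 - \<rho>) * (M + \<rho> * M)"
    using assms by (intro mult_left_mono) auto
  also have "\<dots> \<le> M"
    using assms by (simp add: algebra_simps)
  finally have "(1 - \<rho>) * ((1 - \<rho>) * (M + K)) \<le> (1 - \<rho>) * M"
    using assms by (intro mult_left_mono) auto
  also have "\<dots> \<le> y"
    by (fact assms(6))
  finally have "(1 - \<rho>) * ((1 - \<rho>) * (M + K)) \<le> y" .
  then show ?thesis
    using assms by (simp add: le_divide_eq power2_eq_square mult.assoc)
qed

text \<open>The Gibbs weights concentrate on coordinates within a factor \<open>1 - \<rho>\<close> of the maximum,
  where the death rate is at least \<open>(1 - \<rho>)\<^sup>2 A\<close>.\<close>
lemma gibbs_average_rate_ge:
  fixes x :: "'a \<Rightarrow> nat" and d :: "'a \<Rightarrow> real"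
  assumes I: "finite I" "I \<noteq> {}" and h: "0 < h" and "0 \<le> A" "0 \<le> K" and \<rho>: "0 < \<rho>" "\<rho> < 1"
    and d_ge: "\<And>i. i \<in> I \<Longrightarrow> A * real (x i) / (real (Max (x ` I)) + K) \<le> d i"
    and concentrated: "real (card I) * exp (- h * \<rho> * real (Max (x ` I))) \<le> \<rho>"
    and K: "K \<le> \<rho> * real (Max (x ` I))"
  shows "(1 - \<rho>) ^ 3 * A \<le> (\<Sum>i\<in>I. d i * (exp (h * real (x i)) / exp_sum I h x))"
proof -
  define M where "M = real (Max (x ` I))"
  define p where "p i = exp (h * real (x i)) / exp_sum I h x" for i
  define J where "J = {i \<in> I. (1 - \<rho>) * M \<le> real (x i)}"
  have M: "0 < M"
  proof (rule ccontr)
    assume "\<not> 0 < M"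
    then have "M = 0"
      unfolding M_def by simp
    moreover have "1 \<le> real (card I)"
      using I by (simp add: Suc_le_eq card_gt_0_iff)
    ultimately show False
      using concentrated \<rho> unfolding M_def by simp
  qed
  have p_nonneg: "0 \<le> p i" for i
    unfolding p_def using exp_sum_pos[OF I] by (simp add: less_imp_le)
  have d_nonneg: "0 \<le> d i" if "i \<in> I" for i
    using d_ge[OF that] \<open>0 \<le> A\<close> \<open>0 \<le> K\<close> M unfolding M_def[symmetric]
    by (meson divide_nonneg_nonneg mult_nonneg_nonneg of_nat_0_le_iff order_trans add_nonneg_nonneg less_imp_le)
  have rate_J: "A * (1 - \<rho>) ^ 2 \<le> d i" if "i \<in> J" for i
  proof -
    have "A * (1 - \<rho>) ^ 2 \<le> A * (real (x i) / (M + K))"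
      using that near_max_share_ge[OF M \<open>0 \<le> K\<close> K[folded M_def] \<rho>] \<open>0 \<le> A\<close>
      unfolding J_def by (intro mult_left_mono) auto
    then show ?thesis
      using d_ge[of i] that unfolding J_def M_def by auto
  qed
  have "(1 - \<rho>) ^ 3 * A \<le> A * (1 - \<rho>) ^ 2 * (\<Sum>i\<in>J. p i)"
    using mult_left_mono[OF gibbs_mass_near_Max_ge[OF I h concentrated], of "A * (1 - \<rho>) ^ 2"] \<open>0 \<le> A\<close>
    unfolding p_def J_def M_def by (simp add: ac_simps power3_eq_cube power2_eq_square)
  also have "\<dots> = (\<Sum>i\<in>J. A * (1 - \<rho>) ^ 2 * p i)"
    by (simp add: sum_distrib_left)
  also have "\<dots> \<le> (\<Sum>i\<in>J. d i * p i)"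
    using rate_J p_nonneg by (intro sum_mono mult_right_mono)
  also have "\<dots> \<le> (\<Sum>i\<in>I. d i * p i)"
    using I p_nonneg d_nonneg by (intro sum_mono2) (auto simp: J_def)
  finally show ?thesis
    unfolding p_def .
qed

section \<open>A Lyapunov supersolution\<close>

lemma drift_factor_le:
  fixes b A c W \<rho> h :: real
  assumes \<rho>: "0 < \<rho>" "\<rho> < 1" "exp (2 * h) = 1 + \<rho>" and "0 \<le> A"
    and W: "(1 - \<rho>) ^ 3 * A \<le> W" and c: "c + \<rho> * (b + 4 * A) \<le> A - b"
  shows "b * exp (2 * h) - exp (- 2 * h) * W \<le> - c"
proof -
  have "exp (- 2 * h) = 1 / (1 + \<rho>)"
    using \<rho>(3) by (simp add: exp_minus inverse_eq_divide)
  moreover have "(1 - \<rho>) * (1 + \<rho>) \<le> 1"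
    using mult_nonneg_nonneg[of \<rho> \<rho>] by (simp add: algebra_simps)
  ultimately have "1 - \<rho> \<le> exp (- 2 * h)"
    using \<rho> by (simp add: le_divide_eq)
  then have "(1 - \<rho>) * ((1 - \<rho>) ^ 3 * A) \<le> exp (- 2 * h) * W"
    using W \<rho> \<open>0 \<le> A\<close> by (intro mult_mono) auto
  moreover have "(1 - 4 * \<rho>) * A \<le> (1 - \<rho>) ^ 4 * A"
    using Bernoulli_inequality_even[of 4 "- \<rho>"] \<open>0 \<le> A\<close> by (intro mult_right_mono) auto
  moreover have "(1 - \<rho>) ^ 4 * A = (1 - \<rho>) * ((1 - \<rho>) ^ 3 * A)"
    by (simp add: eval_nat_numeral)
  ultimately have "b * exp (2 * h) - exp (- 2 * h) * W \<le> b * (1 + \<rho>) - (1 - 4 * \<rho>) * A"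
    using \<rho>(3) by simp
  also have "\<dots> \<le> - c"
    using c by (simp add: algebra_simps)
  finally show ?thesis .
qed

lemma logistic_mult_le:
  assumes "0 < h" "0 < B" "0 < \<gamma>" and z: "z \<le> - \<bar>ln (B / \<gamma>)\<bar> / h"
  shows "logistic h z * B \<le> \<gamma>"
proof -
  have "h * z \<le> h * (- \<bar>ln (B / \<gamma>)\<bar> / h)"
    using z \<open>0 < h\<close> by (intro mult_left_mono) auto
  then have "logistic h z \<le> exp (- \<bar>ln (B / \<gamma>)\<bar>)"
    using logistic_le_exp[of h z] \<open>0 < h\<close> by (simp add: order_trans)
  also have "\<dots> \<le> exp (- ln (B / \<gamma>))"
    by simp
  also have "\<dots> = \<gamma> / B"
    using assms by (simp add: exp_minus)
  finally show ?thesis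
    using \<open>0 < B\<close> by (simp add: le_divide_eq)
qed

text \<open>Softplus is a smoothed positive part, so \<open>lyap\<close> is a smoothed \<open>max (z\<^sub>0, lse I h x - c r) + \<gamma> r\<close>.\<close>
definition lyap :: "'a set \<Rightarrow> real \<Rightarrow> real \<Rightarrow> real \<Rightarrow> real \<Rightarrow> real \<Rightarrow> ('a \<Rightarrow> nat) \<Rightarrow> real" where
  "lyap I h c \<gamma> z0 r x = z0 + softplus h (lse I h x - (z0 + c * r)) + \<gamma> * r"

lemma has_real_derivative_lyap:
  assumes "0 < h"
  shows "((\<lambda>r. lyap I h c \<gamma> z0 r x) has_real_derivative \<gamma> - c * logistic h (lse I h x - (z0 + c * r))) (at r)"
proof -
  have "((\<lambda>r. lse I h x - (z0 + c * r)) has_real_derivative - c) (at r)"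
    by (auto intro!: derivative_eq_intros)
  from DERIV_chain2[OF has_real_derivative_softplus[OF assms] this] show ?thesis
    unfolding lyap_def by (auto intro!: derivative_eq_intros simp: algebra_simps)
qed

lemma isCont_lyap_derivative: "isCont (\<lambda>r. \<gamma> - c * logistic h (lse I h x - (z0 + c * r))) r"
proof -
  have "isCont (\<lambda>r. lse I h x - (z0 + c * r)) r"
    by (intro continuous_intros)
  then have "isCont (\<lambda>r. logistic h (lse I h x - (z0 + c * r))) r"
    using isCont_o2 isCont_logistic by blast
  then show ?thesis
    by (intro continuous_intros)
qed

lemma lyap_nonneg: "0 < h \<Longrightarrow> 0 \<le> z0 \<Longrightarrow> 0 \<le> \<gamma> \<Longrightarrow> 0 \<le> r \<Longrightarrow> 0 \<le> lyap I h c \<gamma> z0 r x"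
  unfolding lyap_def using softplus_nonneg by (simp add: add_nonneg_nonneg)

lemma Max_le_lyap_0:
  "finite I \<Longrightarrow> I \<noteq> {} \<Longrightarrow> 0 < h \<Longrightarrow> real (Max (x ` I)) \<le> lyap I h c \<gamma> z0 0 x"
  using Max_le_lse[of I h x] softplus_ge[of h "lse I h x - (z0 + c * 0)"] unfolding lyap_def by simp

lemma lyap_le:
  assumes "finite I" "I \<noteq> {}" "0 < h" "0 \<le> z0"
  shows "lyap I h c \<gamma> z0 r x \<le> z0 + max 0 (real (Max (x ` I)) - c * r) + (ln (card I) + ln 2) / h + \<gamma> * r"
proof -
  have "0 \<le> ln (card I) / h"
    using assms by (simp add: Suc_le_eq card_gt_0_iff)
  then have "max 0 (lse I h x - (z0 + c * r)) \<le> max 0 (real (Max (x ` I)) - c * r) + ln (card I) / h"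
    using lse_le_Max[OF assms(1-3), of x] assms(4) by linarith
  then show ?thesis
    unfolding lyap_def using softplus_le[OF assms(3), of "lse I h x - (z0 + c * r)"]
      add_divide_distrib[of "ln (card I)" "ln 2" h]
    by linarith
qed

lemma concentration_threshold:
  fixes n K \<rho> h M :: real
  assumes "1 \<le> n" "0 < \<rho>" "0 < h" and M: "max (K / \<rho>) (ln (n / \<rho>) / (h * \<rho>)) \<le> M"
  shows "n * exp (- h * \<rho> * M) \<le> \<rho> \<and> K \<le> \<rho> * M"
proof
  have "ln (n / \<rho>) \<le> h * \<rho> * M"
    using M assms by (simp add: divide_le_eq mult.commute)
  moreover have "exp (ln (n / \<rho>)) = n / \<rho>"
    using assms by simp
  ultimately have "n / \<rho> \<le> exp (h * \<rho> * M)"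
    by (metis exp_le_cancel_iff)
  then show "n * exp (- h * \<rho> * M) \<le> \<rho>"
    using assms by (simp add: exp_minus divide_le_eq field_simps)
  show "K \<le> \<rho> * M"
    using M assms by (simp add: divide_le_eq mult.commute)
qed

lemma lyap_at_horizon_le:
  assumes "finite I" "I \<noteq> {}" "0 < h" "0 \<le> z0" "0 < \<kappa>" "0 < e"
    and \<gamma>: "\<gamma> \<le> e * \<kappa> / 3" and c: "\<kappa> - c \<le> e * \<kappa> / 3"
    and M: "3 * (z0 + (ln (card I) + ln 2) / h) / e \<le> real (Max (x ` I))"
  shows "lyap I h c \<gamma> z0 (real (Max (x ` I)) / \<kappa>) x \<le> e * real (Max (x ` I))"
proof -
  define M where "M = real (Max (x ` I))"
  define t where "t = M / \<kappa>"
  have "0 \<le> t" and Mt: "M = \<kappa> * t"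
    unfolding t_def M_def using \<open>0 < \<kappa>\<close> by simp_all
  have "\<gamma> * t \<le> e * M / 3"
    using mult_right_mono[OF \<gamma> \<open>0 \<le> t\<close>] unfolding Mt by simp
  moreover have "max 0 (M - c * t) \<le> e * M / 3"
  proof (rule max.boundedI)
    show "0 \<le> e * M / 3"
      unfolding M_def using \<open>0 < e\<close> by simp
    show "M - c * t \<le> e * M / 3"
      using mult_right_mono[OF c \<open>0 \<le> t\<close>] unfolding Mt by (simp add: algebra_simps)
  qed
  moreover have "z0 + (ln (card I) + ln 2) / h \<le> e * M / 3"
    using M \<open>0 < e\<close> unfolding M_def by (simp add: divide_le_eq mult.commute)
  ultimately show ?thesis
    using lyap_le[OF assms(1-4), of c \<gamma> t x] unfolding M_def[symmetric] t_def[symmetric] by linarith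
qed

context
  fixes I :: "idx set" and b A K :: real and d :: "state \<Rightarrow> idx \<Rightarrow> real"
  assumes I: "finite I" "I \<noteq> {}" and b: "0 \<le> b" "b < A" and K: "0 \<le> K"
    and d_zero: "\<And>x i. i \<in> I \<Longrightarrow> x i = 0 \<Longrightarrow> d x i = 0"
    and d_ge: "\<And>x i. i \<in> I \<Longrightarrow> A * real (x i) / (real (Max (x ` I)) + K) \<le> d x i"
begin

lemma d_nonneg: "i \<in> I \<Longrightarrow> 0 \<le> d x i"
proof -
  assume "i \<in> I"
  have "0 \<le> A * real (x i) / (real (Max (x ` I)) + K)"
    using b K by (intro divide_nonneg_nonneg mult_nonneg_nonneg) auto
  then show ?thesis
    using d_ge[OF \<open>i \<in> I\<close>, of x] by (rule order_trans)
qed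

text \<open>Far from the origin (\<open>max x \<ge> M\<^sub>1\<close>) the soft maximum drifts down at rate nearly \<open>A - b\<close>;
  near the origin, \<open>z\<^sub>0\<close> is so large that the logistic factor, hence the drift, is below \<open>\<gamma>\<close>.\<close>
lemma generator_lyap_le:
  assumes h: "0 < h" and \<rho>: "0 < \<rho>" "\<rho> < 1" "exp (2 * h) = 1 + \<rho>"
    and c: "0 < c" "c + \<rho> * (b + 4 * A) \<le> A - b" and \<gamma>: "0 < \<gamma>"
    and M1: "\<And>M. M1 \<le> M \<Longrightarrow> real (card I) * exp (- h * \<rho> * M) \<le> \<rho> \<and> K \<le> \<rho> * M"
    and z0: "M1 + ln (card I) / h + \<bar>ln ((b * exp (2 * h) + c) / \<gamma>)\<bar> / h \<le> z0"
    and "0 \<le> r"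
  shows "generator I b d (lyap I h c \<gamma> z0 r) x \<le> \<gamma> - c * logistic h (lse I h x - (z0 + c * r))"
proof -
  define \<sigma> where "\<sigma> = logistic h (lse I h x - (z0 + c * r))"
  define W where "W = (\<Sum>i\<in>I. d x i * (exp (h * real (x i)) / exp_sum I h x))"
  have \<sigma>: "0 < \<sigma>"
    unfolding \<sigma>_def by (rule logistic_pos)
  have W: "0 \<le> W"
    unfolding W_def using d_nonneg exp_sum_pos[OF I]
    by (intro sum_nonneg mult_nonneg_nonneg) (auto intro: less_imp_le)
  have "generator I b d (lyap I h c \<gamma> z0 r) x \<le> \<sigma> * (b * exp (2 * h) - exp (- 2 * h) * W)"
    using softplus_lse_drift[OF I h b(1) d_nonneg d_zero, where s = "z0 + c * r"]
    unfolding generator_eq_sum_diff lyap_def \<sigma>_def W_def by simp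
  also have "\<dots> \<le> \<gamma> - c * \<sigma>"
  proof (cases "M1 \<le> real (Max (x ` I))")
    case True
    have "(1 - \<rho>) ^ 3 * A \<le> W"
      unfolding W_def using M1[OF True] b
      by (intro gibbs_average_rate_ge[OF I h _ K \<rho>(1,2) d_ge]) auto
    then have "b * exp (2 * h) - exp (- 2 * h) * W \<le> - c"
      using b \<rho> c by (intro drift_factor_le) auto
    then have "\<sigma> * (b * exp (2 * h) - exp (- 2 * h) * W) \<le> \<sigma> * - c"
      using \<sigma> by (intro mult_left_mono) auto
    then show ?thesis
      using \<gamma> by (simp add: mult.commute)
  next
    case False
    have "lse I h x - (z0 + c * r) \<le> - \<bar>ln ((b * exp (2 * h) + c) / \<gamma>)\<bar> / h"
      using lse_le_Max[OF I h, of x] False z0 mult_nonneg_nonneg[of c r] c \<open>0 \<le> r\<close> by linarith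
    then have "\<sigma> * (b * exp (2 * h) + c) \<le> \<gamma>"
      unfolding \<sigma>_def using b c \<gamma> h by (intro logistic_mult_le) (auto intro: add_nonneg_pos)
    moreover have "\<sigma> * (b * exp (2 * h) - exp (- 2 * h) * W) \<le> \<sigma> * (b * exp (2 * h))"
      using \<sigma> W by (intro mult_left_mono) auto
    ultimately show ?thesis
      by (simp add: algebra_simps)
  qed
  finally show ?thesis
    unfolding \<sigma>_def .
qed

lemma lyap_supersolution_exists:
  assumes "0 < e"
  obtains h z0 \<gamma> c where "0 < h" "0 \<le> z0" "0 < \<gamma>" "\<gamma> \<le> e * (A - b) / 3" "A - b - c \<le> e * (A - b) / 3"
    and "\<And>r x. 0 \<le> r \<Longrightarrow> generator I b d (lyap I h c \<gamma> z0 r) x \<le> \<gamma> - c * logistic h (lse I h x - (z0 + c * r))"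
proof -
  define \<kappa> where "\<kappa> = A - b"
  define \<delta> where "\<delta> = min (e / 3) (1 / 2)"
  define c where "c = (1 - \<delta>) * \<kappa>"
  define \<gamma> where "\<gamma> = e * \<kappa> / 3"
  define \<rho> where "\<rho> = min (1 / 2) (\<delta> * \<kappa> / (b + 4 * A))"
  define h where "h = ln (1 + \<rho>) / 2"
  define n where "n = real (card I)"
  define M1 where "M1 = max (K / \<rho>) (ln (n / \<rho>) / (h * \<rho>))"
  define z0 where "z0 = max 0 (M1 + ln n / h + \<bar>ln ((b * exp (2 * h) + c) / \<gamma>)\<bar> / h)"
  have \<kappa>: "0 < \<kappa>" and \<delta>: "0 < \<delta>" "\<delta> \<le> 1 / 2" "\<delta> \<le> e / 3"
    unfolding \<kappa>_def \<delta>_def using b \<open>0 < e\<close> by auto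
  have bA: "0 < b + 4 * A"
    using b by simp
  have \<rho>: "0 < \<rho>" "\<rho> < 1" "\<rho> * (b + 4 * A) \<le> \<delta> * \<kappa>"
  proof -
    show "0 < \<rho>" "\<rho> < 1"
      unfolding \<rho>_def using bA \<kappa> \<delta> by auto
    have "\<rho> \<le> \<delta> * \<kappa> / (b + 4 * A)"
      unfolding \<rho>_def by simp
    then show "\<rho> * (b + 4 * A) \<le> \<delta> * \<kappa>"
      using bA by (simp add: le_divide_eq)
  qed
  have h: "0 < h" "exp (2 * h) = 1 + \<rho>"
    unfolding h_def using \<rho> by auto
  have n: "1 \<le> n"
    unfolding n_def using I by (simp add: Suc_le_eq card_gt_0_iff)
  have M1: "n * exp (- h * \<rho> * M) \<le> \<rho> \<and> K \<le> \<rho> * M" if "M1 \<le> M" for M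
    using concentration_threshold[OF n \<rho>(1) h(1)] that unfolding M1_def .
  show ?thesis
  proof
    show "0 < h" "0 \<le> z0"
      using h unfolding z0_def by auto
    show "0 < \<gamma>" "\<gamma> \<le> e * (A - b) / 3" "A - b - c \<le> e * (A - b) / 3"
      unfolding \<gamma>_def c_def \<kappa>_def[symmetric] using \<open>0 < e\<close> \<kappa> \<delta> by (auto simp: algebra_simps)
    show "generator I b d (lyap I h c \<gamma> z0 r) x \<le> \<gamma> - c * logistic h (lse I h x - (z0 + c * r))"
      if "0 \<le> r" for r x
    proof (rule generator_lyap_le[OF h(1) \<rho>(1,2) h(2) _ _ _ M1[unfolded n_def] _ that])
      show "0 < c" "c + \<rho> * (b + 4 * A) \<le> A - b" "0 < \<gamma>"
        unfolding c_def \<gamma>_def \<kappa>_def[symmetric] using \<rho> \<delta> \<kappa> \<open>0 < e\<close> by (auto simp: algebra_simps)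
      show "M1 + ln (card I) / h + \<bar>ln ((b * exp (2 * h) + c) / \<gamma>)\<bar> / h \<le> z0"
        unfolding z0_def n_def[symmetric] by simp
    qed
  qed
qed

theorem expect_Max_sublinear:
  assumes "0 < e"
  obtains R where "\<And>x. R \<le> real (Max (x ` I)) \<Longrightarrow>
    expect I b d (real (Max (x ` I)) / (A - b)) x (\<lambda>y. ennreal (real (Max (y ` I))))
      \<le> ennreal (e * real (Max (x ` I)))"
proof -
  obtain h z0 \<gamma> c where h: "0 < h" and z0: "0 \<le> z0" and \<gamma>: "0 < \<gamma>" "\<gamma> \<le> e * (A - b) / 3"
    and c: "A - b - c \<le> e * (A - b) / 3"
    and super: "\<And>r x. 0 \<le> r \<Longrightarrow>
      generator I b d (lyap I h c \<gamma> z0 r) x \<le> \<gamma> - c * logistic h (lse I h x - (z0 + c * r))"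
    using lyap_supersolution_exists[OF \<open>0 < e\<close>] by blast
  show ?thesis
  proof (rule that)
    fix x :: state
    define t where "t = real (Max (x ` I)) / (A - b)"
    assume "3 * (z0 + (ln (card I) + ln 2) / h) / e \<le> real (Max (x ` I))"
    moreover have "0 \<le> t"
      unfolding t_def using b by simp
    moreover have "expect I b d t x (\<lambda>y. ennreal (real (Max (y ` I)))) \<le> ennreal (lyap I h c \<gamma> z0 t x)"
      by (rule expect_le_supersolution[where w' = "\<lambda>r x. \<gamma> - c * logistic h (lse I h x - (z0 + c * r))",
            OF I(1) b(1) d_nonneg has_real_derivative_lyap[OF h] isCont_lyap_derivative
            lyap_nonneg[OF h z0 less_imp_le[OF \<gamma>(1)]] ennreal_leI[OF Max_le_lyap_0[OF I h]] super \<open>0 \<le> t\<close>])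
    ultimately show "expect I b d (real (Max (x ` I)) / (A - b)) x (\<lambda>y. ennreal (real (Max (y ` I))))
      \<le> ennreal (e * real (Max (x ` I)))"
      unfolding t_def using lyap_at_horizon_le[OF I h z0 _ \<open>0 < e\<close> \<gamma>(2) c] b
      by (smt (verit) ennreal_leI order_trans)
  qed
qed

end

section \<open>The discretised path-loss kernel\<close>

lemma finite_cells [simp]: "finite (cells m)"
  unfolding cells_def by simp

lemma cells_ne: "0 < m \<Longrightarrow> cells m \<noteq> {}"
  unfolding cells_def by auto

lemma tdist_nonneg: "0 \<le> tdist Q u v"
  unfolding tdist_def by (rule cInf_greatest) auto

lemma tdist_self: "tdist Q u u = 0"
proof -
  have "tdist Q u u \<le> norm (u - u + (2 * Q * of_int (0::int), 2 * Q * of_int (0::int)))"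
    unfolding tdist_def
    by (rule cInf_lower) (auto intro!: bdd_belowI[where m=0] exI[where x=0] simp: zero_prod_def)
  then show ?thesis
    using tdist_nonneg[of Q u u] by (simp add: zero_prod_def)
qed

lemma int_pairs_image_shift:
  fixes g :: "int \<Rightarrow> int \<Rightarrow> 'a"
  shows "{g (k1 + p1) (k2 + p2) | k1 k2. True} = {g k1 k2 | k1 k2. True}"
proof (intro set_eqI iffI)
  fix z
  assume "z \<in> {g k1 k2 | k1 k2. True}"
  then obtain k1 k2 where "z = g ((k1 - p1) + p1) ((k2 - p2) + p2)"
    by auto
  then show "z \<in> {g (k1 + p1) (k2 + p2) | k1 k2. True}"
    by blast
qed blast

lemma tdist_add_period:
  fixes p1 p2 :: int
  shows "tdist Q (u + (2 * Q * of_int p1, 2 * Q * of_int p2)) v = tdist Q u v"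
proof -
  have "u + (2 * Q * of_int p1, 2 * Q * of_int p2) - v + (2 * Q * of_int k1, 2 * Q * of_int k2)
      = u - v + (2 * Q * of_int (k1 + p1), 2 * Q * of_int (k2 + p2))" for k1 k2 :: int
    by (simp add: algebra_simps)
  then show ?thesis
    unfolding tdist_def
    using int_pairs_image_shift[of "\<lambda>k1 k2. norm (u - v + (2 * Q * of_int k1, 2 * Q * of_int k2))" p1 p2]
    by (simp only:)
qed

lemma tdist_translate: "tdist Q (u + a) (v + a) = tdist Q u v"
  unfolding tdist_def by simp

lemma mem_cell_iff: "b \<in> cell eps i \<longleftrightarrow>
   real (fst i) * eps - eps / 2 \<le> fst b \<and> fst b \<le> real (fst i) * eps + eps / 2 \<and>
   real (snd i) * eps - eps / 2 \<le> snd b \<and> snd b \<le> real (snd i) * eps + eps / 2"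
  unfolding cell_def by (cases b) (auto simp: cbox_Pair_eq)

definition leps_values :: "(real \<Rightarrow> real) \<Rightarrow> real \<Rightarrow> real \<Rightarrow> idx \<Rightarrow> idx \<Rightarrow> real set" where
  "leps_values l Q eps i j = {l (tdist Q b b') | b b'. b \<in> cell eps i \<and> b' \<in> cell eps j}"

lemma leps_eq_Sup: "leps l Q eps i j = Sup (leps_values l Q eps i j)"
  unfolding leps_def leps_values_def by simp

lemma center_in_cell: "0 < eps \<Longrightarrow> (real (fst i) * eps, real (snd i) * eps) \<in> cell eps i"
  by (simp add: mem_cell_iff)

lemma leps_values_ne: "0 < eps \<Longrightarrow> leps_values l Q eps i j \<noteq> {}"
  unfolding leps_values_def using center_in_cell by blast

lemma bdd_above_leps_values: "bounded (l ` {0..}) \<Longrightarrow> bdd_above (leps_values l Q eps i j)"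
  unfolding leps_values_def
  by (rule bdd_above_mono[OF bounded_imp_bdd_above]) (auto intro: tdist_nonneg)

lemma l_tdist_le_leps:
  assumes "bounded (l ` {0..})" "b \<in> cell eps i" "b' \<in> cell eps j"
  shows "l (tdist Q b b') \<le> leps l Q eps i j"
proof -
  have "l (tdist Q b b') \<in> leps_values l Q eps i j"
    unfolding leps_values_def using assms by blast
  then show ?thesis
    unfolding leps_eq_Sup by (rule cSup_upper[OF _ bdd_above_leps_values[OF assms(1)]])
qed

lemma leps_nonneg:
  assumes "0 < eps" "bounded (l ` {0..})" "\<forall>u\<ge>0. 0 \<le> l u"
  shows "0 \<le> leps l Q eps i j"
proof -
  obtain b b' where "b \<in> cell eps i" "b' \<in> cell eps j"
    using leps_values_ne[OF assms(1)] unfolding leps_values_def by blast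
  then show ?thesis
    using l_tdist_le_leps[OF assms(2)] assms(3) tdist_nonneg by (meson order_trans)
qed

lemma leps_diag_ge: "0 < eps \<Longrightarrow> bounded (l ` {0..}) \<Longrightarrow> l 0 \<le> leps l Q eps i i"
  using l_tdist_le_leps[OF _ center_in_cell[of eps i] center_in_cell[of eps i], of l Q] by (simp add: tdist_self)

text \<open>\<open>sub_mod m a c\<close> is \<open>(a - c) mod m\<close> for \<open>a, c < m\<close>; \<open>cell_sub m i j\<close> is the index of the
  cell \<open>A\<^sub>i - a\<^sub>j\<close> on the torus.\<close>
definition sub_mod :: "nat \<Rightarrow> nat \<Rightarrow> nat \<Rightarrow> nat" where
  "sub_mod m a c = (if c \<le> a then a - c else a + m - c)"

definition cell_sub :: "nat \<Rightarrow> idx \<Rightarrow> idx \<Rightarrow> idx" where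
  "cell_sub m i j = (sub_mod m (fst i) (fst j), sub_mod m (snd i) (snd j))"

lemma sub_mod_eq: "c \<le> m \<Longrightarrow> \<exists>p::int. real (sub_mod m a c) = real a - real c + real m * of_int p"
  by (cases "c \<le> a") (auto intro: exI[of _ 0] exI[of _ 1] simp: sub_mod_def of_nat_diff)

lemma sub_mod_scaled_eq:
  assumes "c \<le> m" "real m * eps = 2 * Q"
  obtains p :: int where "real (sub_mod m a c) * eps = (real a - real c) * eps + 2 * Q * of_int p"
proof -
  obtain p :: int where p: "real (sub_mod m a c) = real a - real c + real m * of_int p"
    using sub_mod_eq[OF assms(1)] by blast
  have "real (sub_mod m a c) * eps = (real a - real c) * eps + (real m * eps) * of_int p"
    unfolding p by (simp add: algebra_simps)
  then show thesis
    using that unfolding assms(2) by blast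
qed

lemma sub_mod_inj: "a < m \<Longrightarrow> c1 < m \<Longrightarrow> c2 < m \<Longrightarrow> sub_mod m a c1 = sub_mod m a c2 \<Longrightarrow> c1 = c2"
  unfolding sub_mod_def by (auto split: if_splits)

lemma cell_sub_in_cells: "i \<in> cells m \<Longrightarrow> j \<in> cells m \<Longrightarrow> cell_sub m i j \<in> cells m"
  unfolding cells_def cell_sub_def sub_mod_def by (auto split: if_splits)

lemma inj_on_cell_sub: "i \<in> cells m \<Longrightarrow> inj_on (cell_sub m i) (cells m)"
  unfolding inj_on_def cells_def cell_sub_def using sub_mod_inj by (auto simp: prod_eq_iff)

text \<open>Translating both cells by \<open>-a\<^sub>j\<close> (and the first one by a period of the torus) maps
  \<open>A\<^sub>i \<times> A\<^sub>j\<close> into \<open>A\<^bsub>cell_sub m i j\<^esub> \<times> A\<^sub>0\<close> and preserves torus distances.\<close>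
lemma leps_le_leps_cell_sub:
  assumes eps: "0 < eps" and m: "real m * eps = 2 * Q" and bd: "bounded (l ` {0..})" and j: "j \<in> cells m"
  shows "leps l Q eps i j \<le> leps l Q eps (cell_sub m i j) (0, 0)"
proof -
  have "fst j \<le> m" "snd j \<le> m"
    using j by (auto simp: cells_def)
  then obtain p1 p2 :: int
    where p1: "real (sub_mod m (fst i) (fst j)) * eps = (real (fst i) - real (fst j)) * eps + 2 * Q * of_int p1"
      and p2: "real (sub_mod m (snd i) (snd j)) * eps = (real (snd i) - real (snd j)) * eps + 2 * Q * of_int p2"
    using sub_mod_scaled_eq[OF _ m] by metis
  define v where "v = (- real (fst j) * eps, - real (snd j) * eps)"
  define P where "P = (2 * Q * of_int p1, 2 * Q * of_int p2)"
  have "leps_values l Q eps i j \<subseteq> leps_values l Q eps (cell_sub m i j) (0, 0)"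
  proof
    fix z
    assume "z \<in> leps_values l Q eps i j"
    then obtain b b' where z: "z = l (tdist Q b b')" and b: "b \<in> cell eps i" and b': "b' \<in> cell eps j"
      unfolding leps_values_def by blast
    have "z = l (tdist Q ((b + v) + P) (b' + v))"
      unfolding z P_def by (simp add: tdist_add_period tdist_translate)
    moreover have "(b + v) + P \<in> cell eps (cell_sub m i j)"
      using b unfolding mem_cell_iff cell_sub_def fst_conv snd_conv p1 p2
      by (simp add: v_def P_def algebra_simps)
    moreover have "b' + v \<in> cell eps (0, 0)"
      using b' unfolding mem_cell_iff v_def by auto
    ultimately show "z \<in> leps_values l Q eps (cell_sub m i j) (0, 0)"
      unfolding leps_values_def by blast
  qed
  then show ?thesis
    unfolding leps_eq_Sup by (rule cSup_subset_mono[OF leps_values_ne[OF eps] bdd_above_leps_values[OF bd]])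
qed

lemma sum_leps_row_le_column:
  assumes "0 < eps" "real m * eps = 2 * Q" "bounded (l ` {0..})" "\<forall>u\<ge>0. 0 \<le> l u" and i: "i \<in> cells m"
  shows "(\<Sum>j\<in>cells m. leps l Q eps i j) \<le> (\<Sum>k\<in>cells m. leps l Q eps k (0, 0))"
proof -
  have "(\<Sum>j\<in>cells m. leps l Q eps i j) \<le> (\<Sum>j\<in>cells m. leps l Q eps (cell_sub m i j) (0, 0))"
    using assms by (intro sum_mono leps_le_leps_cell_sub)
  also have "\<dots> = (\<Sum>k\<in>cell_sub m i ` cells m. leps l Q eps k (0, 0))"
    by (simp add: sum.reindex[OF inj_on_cell_sub[OF i]])
  also have "\<dots> \<le> (\<Sum>k\<in>cells m. leps l Q eps k (0, 0))"
    using assms cell_sub_in_cells[OF i] by (intro sum_mono2) (auto intro: leps_nonneg)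
  finally show ?thesis .
qed

lemma leps_column_sum_ge_one:
  assumes "0 < eps" "0 < m" "bounded (l ` {0..})" "\<forall>u\<ge>0. 0 \<le> l u" "l 0 = 1"
  shows "1 \<le> (\<Sum>k\<in>cells m. leps l Q eps k (0, 0))"
proof -
  have "1 \<le> leps l Q eps (0, 0) (0, 0)"
    using leps_diag_ge[OF assms(1,3)] assms(5) by metis
  also have "\<dots> \<le> (\<Sum>k\<in>cells m. leps l Q eps k (0, 0))"
    using assms by (intro member_le_sum leps_nonneg) (auto simp: cells_def)
  finally show ?thesis .
qed

section \<open>Death rates of the network\<close>

lemma inverse_succ_le_ln_one_plus_inverse:
  fixes a :: real
  assumes "0 < a"
  shows "1 / (a + 1) \<le> ln (1 + 1 / a)"
proof -
  have "ln (a / (a + 1)) \<le> a / (a + 1) - 1"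
    using assms by (intro ln_le_minus_one) auto
  moreover have "ln (a / (a + 1)) = - ln (1 + 1 / a)"
    using assms by (simp add: ln_div field_simps)
  moreover have "a / (a + 1) - 1 = - (1 / (a + 1))"
    using assms by (simp add: field_simps)
  ultimately show ?thesis
    by simp
qed

lemma le_supn: "i \<in> cells m \<Longrightarrow> x i \<le> supn m x"
  unfolding supn_def by (rule Max_ge) auto

definition interference :: "(real \<Rightarrow> real) \<Rightarrow> real \<Rightarrow> real \<Rightarrow> nat \<Rightarrow> state \<Rightarrow> idx \<Rightarrow> real" where
  "interference l Q eps m x i = (\<Sum>j\<in>cells m. (real (x j) - (if j = i then 1 else 0)) * leps l Q eps i j)"

lemma drate_eq_interference:
  "drate l Q eps m N0 C L x i = C / L * real (x i) * log 2 (1 + 1 / (N0 + interference l Q eps m x i))"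
  unfolding drate_def interference_def by simp

lemma interference_bounds:
  assumes "0 < eps" "real m * eps = 2 * Q" "bounded (l ` {0..})" "\<forall>u\<ge>0. 0 \<le> l u"
    and i: "i \<in> cells m" and "1 \<le> x i"
  shows "0 \<le> interference l Q eps m x i"
    and "interference l Q eps m x i \<le> real (supn m x) * (\<Sum>k\<in>cells m. leps l Q eps k (0, 0))"
proof -
  show "0 \<le> interference l Q eps m x i"
    unfolding interference_def using assms leps_nonneg by (intro sum_nonneg mult_nonneg_nonneg) auto
  have "interference l Q eps m x i \<le> (\<Sum>j\<in>cells m. real (supn m x) * leps l Q eps i j)"
    unfolding interference_def
  proof (intro sum_mono mult_right_mono)
    fix j
    assume "j \<in> cells m"
    then show "real (x j) - (if j = i then 1 else 0) \<le> real (supn m x)"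
      using le_supn[of j m x] by auto
    show "0 \<le> leps l Q eps i j"
      using assms by (intro leps_nonneg) auto
  qed
  also have "\<dots> \<le> real (supn m x) * (\<Sum>k\<in>cells m. leps l Q eps k (0, 0))"
    unfolding sum_distrib_left[symmetric] using assms by (intro mult_left_mono sum_leps_row_le_column) auto
  finally show "interference l Q eps m x i \<le> real (supn m x) * (\<Sum>k\<in>cells m. leps l Q eps k (0, 0))" .
qed

text \<open>\<open>log\<^sub>2(1 + 1/a) \<ge> 1/((a + 1) ln 2)\<close>, and the interference at a cell is at most \<open>(max x) S\<close>.\<close>
lemma drate_ge:
  assumes "0 < eps" "real m * eps = 2 * Q" "bounded (l ` {0..})" "\<forall>u\<ge>0. 0 \<le> l u"
    and "0 < N0" "0 < C" "0 < L" and i: "i \<in> cells m"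
  shows "C / (L * ln 2) * real (x i) / (N0 + real (supn m x) * (\<Sum>k\<in>cells m. leps l Q eps k (0, 0)) + 1)
    \<le> drate l Q eps m N0 C L x i"
proof (cases "x i = 0")
  case False
  define I where "I = interference l Q eps m x i"
  define S where "S = (\<Sum>k\<in>cells m. leps l Q eps k (0, 0))"
  have I: "0 \<le> I" "I \<le> real (supn m x) * S"
    unfolding I_def S_def using interference_bounds[OF assms(1-4) i] False by auto
  have "1 / (N0 + real (supn m x) * S + 1) \<le> 1 / (N0 + I + 1)"
    using I \<open>0 < N0\<close> by (intro divide_left_mono) auto
  also have "\<dots> \<le> ln (1 + 1 / (N0 + I))"
    using I \<open>0 < N0\<close> by (intro inverse_succ_le_ln_one_plus_inverse) auto
  finally have "1 / (N0 + real (supn m x) * S + 1) / ln 2 \<le> log 2 (1 + 1 / (N0 + I))"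
    unfolding log_def by (intro divide_right_mono) auto
  then have "C / L * real (x i) * (1 / (N0 + real (supn m x) * S + 1) / ln 2) \<le> drate l Q eps m N0 C L x i"
    unfolding drate_eq_interference I_def[symmetric] using assms by (intro mult_left_mono) auto
  then show ?thesis
    unfolding S_def by (simp add: field_simps)
qed (simp add: drate_eq_interference)

lemma drate_ge_load_share:
  fixes l :: "real \<Rightarrow> real" and Q eps :: real and m :: nat
  defines "S \<equiv> \<Sum>k\<in>cells m. leps l Q eps k (0, 0)"
  assumes "0 < eps" "real m * eps = 2 * Q" "bounded (l ` {0..})" "\<forall>u\<ge>0. 0 \<le> l u"
    and "0 < N0" "0 < C" "0 < L" and "0 < S" and "i \<in> cells m"
  shows "C / (L * ln 2 * S) * real (x i) / (real (supn m x) + (N0 + 1) / S) \<le> drate l Q eps m N0 C L x i"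
proof -
  have "C / (L * ln 2 * S) * real (x i) / (real (supn m x) + (N0 + 1) / S)
      = C / (L * ln 2) * real (x i) / (N0 + real (supn m x) * S + 1)"
    using \<open>0 < S\<close> by (simp add: field_simps)
  moreover have "C / (L * ln 2) * real (x i) / (N0 + real (supn m x) * S + 1) \<le> drate l Q eps m N0 C L x i"
    using drate_ge[OF assms(2-8,10)] unfolding S_def .
  ultimately show ?thesis
    by linarith
qed

theorem mainTheorem11:
  fixes Q eps lam N0 C L :: real and m :: nat and l :: "real \<Rightarrow> real"
  assumes "Q > 0" "eps > 0" "m > 0" "real m * eps = 2 * Q"
    and "bounded (l ` {0..})" "\<forall>u v. 0 \<le> u \<longrightarrow> u \<le> v \<longrightarrow> l v \<le> l u"
    and "\<forall>u \<ge> 0. l u \<ge> 0" "l 0 = 1"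
    and "N0 > 0" "C > 0" "L > 0" "lam > 0"
    and "lam < C / (L * ln 2 * eps ^ 2 * (\<Sum>k\<in>cells m. leps l Q eps k (0, 0)))"
  shows "let \<tau> = 1 / (C / (L * ln 2 * (\<Sum>k\<in>cells m. leps l Q eps k (0, 0))) - lam * eps ^ 2)
         in \<forall>e > 0. \<exists>R. \<forall>x :: state. (\<forall>i. i \<notin> cells m \<longrightarrow> x i = 0) \<and> real (supn m x) \<ge> R \<longrightarrow>
              expect (cells m) (lam * eps ^ 2) (drate l Q eps m N0 C L) (real (supn m x) * \<tau>) x
                     (\<lambda>y. ennreal (real (supn m y)))
              \<le> ennreal (e * real (supn m x))"
proof -
  define S where "S = (\<Sum>k\<in>cells m. leps l Q eps k (0, 0))"
  define A where "A = C / (L * ln 2 * S)"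
  have S: "1 \<le> S"
    unfolding S_def using assms by (intro leps_column_sum_ge_one) auto
  have b: "0 \<le> lam * eps ^ 2" "lam * eps ^ 2 < A"
    using assms(2,10-13) S unfolding A_def S_def[symmetric] by (simp_all add: pos_less_divide_eq ac_simps)
  have rate: "A * real (x i) / (real (Max (x ` cells m)) + (N0 + 1) / S) \<le> drate l Q eps m N0 C L x i"
    if "i \<in> cells m" for x i
    using drate_ge_load_share[OF assms(2,4,5,7,9-11)] S that unfolding A_def S_def supn_def by simp
  have zero: "drate l Q eps m N0 C L x i = 0" if "x i = 0" for x i
    using that by (simp add: drate_eq_interference)
  have K: "0 \<le> (N0 + 1) / S"
    using S assms(9) by simp
  show ?thesis
    unfolding Let_def S_def[symmetric] A_def[symmetric]
  proof (intro allI impI)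
    fix e :: real
    assume "0 < e"
    obtain R where "\<And>x. R \<le> real (Max (x ` cells m)) \<Longrightarrow>
      expect (cells m) (lam * eps ^ 2) (drate l Q eps m N0 C L) (real (Max (x ` cells m)) / (A - lam * eps ^ 2)) x
        (\<lambda>y. ennreal (real (Max (y ` cells m)))) \<le> ennreal (e * real (Max (x ` cells m)))"
      using expect_Max_sublinear[OF finite_cells cells_ne[OF assms(3)] b K zero rate \<open>0 < e\<close>] by blast
    then show "\<exists>R. \<forall>x. (\<forall>i. i \<notin> cells m \<longrightarrow> x i = 0) \<and> R \<le> real (supn m x) \<longrightarrow>
      expect (cells m) (lam * eps ^ 2) (drate l Q eps m N0 C L) (real (supn m x) * (1 / (A - lam * eps ^ 2))) x
        (\<lambda>y. ennreal (real (supn m y))) \<le> ennreal (e * real (supn m x))"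
      unfolding supn_def by auto
  qed
qed

end
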